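(* Let $0<s\le1$, let $\Delta_s\subset\mathbb C$ be the closed disk of radius $s$ and $\Delta_s^*=\Delta_s\setminus\{0\}$. Let $g$ be a smooth real-valued function on an open neighbourhood of $\Delta_s^*$, and put $\omega=\frac{i}{\pi}\partial\bar\partial g$, $\eta=\frac{i}{\pi}\bar\partial g$. Suppose $\omega$ is semipositive and that there exist $a\in\mathbb R$ and a subpolynomial function $\mu$ with $-\log\mu(1/|z|)\le g(z)+a\log|z|\le\log\mu(1/|z|)$ on $\Delta_s^*$. Then $\int_{\Delta_s}\omega:=\lim_{\varepsilon\to0}\int_{\Delta_s\setminus\Delta_\varepsilon}\omega$ exists in $\mathbb R$, $\lim_{t\to0}\int_{\partial\Delta_t}\eta=-a$, and $$0\le\int_{\Delta_s}\omega=\int_{\partial\Delta_s}\eta+a.$$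
   Context: A function $\mu\colon\mathbb R_{>0}\to\mathbb R_{>0}$ is subpolynomial if $\lim_{x\to\infty}\mu(x)/x^n=0$ for every $n>0$. A $(1,1)$-form $\omega$ is semipositive if $\int_{\Delta_t}\psi^*\omega\ge0$ for every continuous map $\psi$ from a closed disk $\Delta_t$ into the domain that is holomorphic on the interior. Boundary circles are positively oriented. *)

theory Defs
  imports "HOL-Analysis.Analysis"
begin

definition subpolynomial :: "(real \<Rightarrow> real) \<Rightarrow> bool" where
  "subpolynomial \<mu> \<longleftrightarrow> (\<forall>x>0. \<mu> x > 0) \<and>
     (\<forall>n::real>0. ((\<lambda>x. \<mu> x / x powr n) \<longlongrightarrow> 0) at_top)"

text \<open>Smooth (C-infinity) real-valued functions on an open set U of C = R^2:
  all iterated partial derivatives (indexed by a list of directions,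
  True = x-direction, False = y-direction) exist and are differentiable on U.\<close>
definition smooth_on :: "complex set \<Rightarrow> (complex \<Rightarrow> real) \<Rightarrow> bool" where
  "smooth_on U g \<longleftrightarrow> (\<exists>D :: bool list \<Rightarrow> complex \<Rightarrow> real.
     (\<forall>z\<in>U. D [] z = g z) \<and>
     (\<forall>l. \<forall>z\<in>U. (D l has_derivative (\<lambda>h. Re h * D (True # l) z + Im h * D (False # l) z)) (at z)))"

definition partial_x :: "(complex \<Rightarrow> real) \<Rightarrow> complex \<Rightarrow> real" where
  "partial_x g z = deriv (\<lambda>t::real. g (z + of_real t)) 0"

definition partial_y :: "(complex \<Rightarrow> real) \<Rightarrow> complex \<Rightarrow> real" where
  "partial_y g z = deriv (\<lambda>t::real. g (z + \<i> * of_real t)) 0"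

definition laplacian :: "(complex \<Rightarrow> real) \<Rightarrow> complex \<Rightarrow> real" where
  "laplacian g z = partial_x (partial_x g) z + partial_y (partial_y g) z"

text \<open>\<omega> = (i/\<pi>) \<partial>\<bar>\<partial> g = (1/(2\<pi>)) (\<Delta>g) dx\<and>dy ; this is its density w.r.t. dx\<and>dy.\<close>
definition omega_density :: "(complex \<Rightarrow> real) \<Rightarrow> complex \<Rightarrow> real" where
  "omega_density g z = laplacian g z / (2 * pi)"

text \<open>\<eta> = (i/\<pi>) \<bar>\<partial> g = (i/\<pi>) (\<partial>g/\<partial>\<bar>z) d\<bar>z, with \<partial>g/\<partial>\<bar>z = (g_x + i g_y)/2.
  This is the coefficient of d\<bar>z.\<close>
definition eta_coeff :: "(complex \<Rightarrow> real) \<Rightarrow> complex \<Rightarrow> complex" where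
  "eta_coeff g z = (\<i> / of_real pi) * ((of_real (partial_x g z) + \<i> * of_real (partial_y g z)) / 2)"

text \<open>Integral of the (0,1)-form f d\<bar>z over the positively oriented circle |z| = t,
  parametrised by \<theta> \<mapsto> t e^{i\<theta>}, \<theta> \<in> [0, 2\<pi>].\<close>
definition circle_integral_dzbar :: "(complex \<Rightarrow> complex) \<Rightarrow> real \<Rightarrow> complex" where
  "circle_integral_dzbar f t =
     integral {0..2*pi} (\<lambda>\<theta>. f (of_real t * exp (\<i> * of_real \<theta>)) *
                               cnj (\<i> * of_real t * exp (\<i> * of_real \<theta>)))"

text \<open>Semipositivity of \<omega> on the domain U: for every continuous \<psi> from a closed disk
  \<Delta>_t into U, holomorphic on the interior, \<integral>_{\<Delta>_t} \<psi>^*\<omega> \<ge> 0, where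
  \<psi>^*\<omega> = (density \<circ> \<psi>) |\<psi>'|^2 du\<and>dv.\<close>
definition semipositive_on :: "complex set \<Rightarrow> (complex \<Rightarrow> real) \<Rightarrow> bool" where
  "semipositive_on U g \<longleftrightarrow> (\<forall>t>0. \<forall>\<psi>. continuous_on (cball 0 t) \<psi> \<and>
       \<psi> holomorphic_on ball 0 t \<and> \<psi> ` cball 0 t \<subseteq> U \<longrightarrow>
       integral (ball 0 t) (\<lambda>w. omega_density g (\<psi> w) * (cmod (deriv \<psi> w))\<^sup>2) \<ge> 0)"

end

theory Submission
  imports Defs
begin

text \<open>
  Let \<open>G(r)\<close> be the mean of \<open>g\<close> over the circle \<open>|z| = r\<close> and let
  \<open>\<Psi>(r) = (2\<pi>)\<^sup>-\<^sup>1 \<integral> r \<partial>\<^sub>r g(r e\<^sup>i\<^sup>\<theta>) d\<theta>\<close> be the integral of \<open>\<eta>\<close> over it, so that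
  \<open>r G'(r) = \<Psi>(r)\<close>. Writing \<open>r \<Delta>g = \<partial>\<^sub>r(r \<partial>\<^sub>r g) + \<partial>\<^sub>\<theta>(r\<^sup>-\<^sup>1 \<partial>\<^sub>\<theta> g)\<close> and integrating
  over a rectangle in the \<open>(\<theta>, r)\<close>-plane gives Green's formula: the integral of \<open>\<omega>\<close> over
  the annulus \<open>s\<^sub>1 \<le> |z| \<le> s\<^sub>2\<close> is \<open>\<Psi>(s\<^sub>2) - \<Psi>(s\<^sub>1)\<close>. Semipositivity, tested on translates
  of small discs, gives \<open>\<Delta>g \<ge> 0\<close>, so \<open>\<Psi>\<close> is nondecreasing. The growth hypothesis and the
  subpolynomiality of \<open>\<mu>\<close> say \<open>G(r) + a log r = o(log(1/r))\<close> as \<open>r \<rightarrow> 0\<close>. If \<open>\<Psi>\<close> stayed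
  below \<open>-a - \<delta>\<close> (or above \<open>-a + \<delta>\<close>) near \<open>0\<close>, integrating \<open>G' = \<Psi>/r\<close> would make
  \<open>G(r) + a log r\<close> grow like \<open>\<delta> log(1/r)\<close>. Hence \<open>\<Psi>(r) \<rightarrow> -a\<close>, and the integral of \<open>\<omega>\<close>
  over \<open>\<Delta>\<^sub>s\<close> is \<open>\<Psi>(s) + a \<ge> 0\<close>.
\<close>

hide_const (open) Polynomial.content

section \<open>Integration in polar coordinates\<close>

definition vec_of_complex :: "complex \<Rightarrow> real^2" where
  "vec_of_complex z = vector [Re z, Im z]"

definition complex_of_vec :: "real^2 \<Rightarrow> complex" where
  "complex_of_vec x = Complex (x$1) (x$2)"

definition vec_of_pair :: "real \<times> real \<Rightarrow> real^2" where
  "vec_of_pair q = vector [fst q, snd q]"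

definition pair_of_vec :: "real^2 \<Rightarrow> real \<times> real" where
  "pair_of_vec x = (x$1, x$2)"

lemma vec2_eq_iff: "(x::real^2) = y \<longleftrightarrow> x$1 = y$1 \<and> x$2 = y$2"
  by (metis (full_types) exhaust_2 vec_eq_iff)

lemma mem_cbox_vec2: "(x::real^2) \<in> cbox a b \<longleftrightarrow> a$1 \<le> x$1 \<and> x$1 \<le> b$1 \<and> a$2 \<le> x$2 \<and> x$2 \<le> b$2"
  by (metis (full_types) exhaust_2 mem_box_cart(2))

lemma content_cbox_vec2:
  "content (cbox a (b::real^2)) = (if cbox a b = {} then 0 else (b$1 - a$1) * (b$2 - a$2))"
  by (simp add: content_cbox_if_cart UNIV_2)

lemma vec_of_complex_inverse [simp]: "complex_of_vec (vec_of_complex z) = z"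
  and complex_of_vec_inverse [simp]: "vec_of_complex (complex_of_vec x) = x"
  and vec_of_pair_inverse [simp]: "pair_of_vec (vec_of_pair q) = q"
  and pair_of_vec_inverse [simp]: "vec_of_pair (pair_of_vec x) = x"
  by (simp_all add: vec_of_complex_def complex_of_vec_def vec_of_pair_def pair_of_vec_def vec2_eq_iff)

lemma vec_of_complex_nth [simp]: "vec_of_complex z $ 1 = Re z" "vec_of_complex z $ 2 = Im z"
  and vec_of_pair_nth [simp]: "vec_of_pair q $ 1 = fst q" "vec_of_pair q $ 2 = snd q"
  and complex_of_vec_sel [simp]: "Re (complex_of_vec x) = x$1" "Im (complex_of_vec x) = x$2"
  by (simp_all add: vec_of_complex_def vec_of_pair_def complex_of_vec_def)

lemma linear_vec_of_complex: "linear vec_of_complex"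
  and linear_vec_of_pair: "linear vec_of_pair"
  by (auto simp: linear_iff vec2_eq_iff)

lemma image_cbox_bij:
  assumes "\<And>y. T (T' y) = y" and "\<And>x. T x \<in> cbox (T u) (T v) \<longleftrightarrow> x \<in> cbox u v"
  shows "T ` cbox u v = cbox (T u) (T v)"
proof (intro subset_antisym subsetI)
  fix y assume "y \<in> cbox (T u) (T v)"
  then have "T' y \<in> cbox u v" using assms by metis
  then show "y \<in> T ` cbox u v" using assms(1) by (metis image_eqI)
qed (use assms(2) in auto)

lemma vec_of_complex_cbox: "vec_of_complex ` cbox u v = cbox (vec_of_complex u) (vec_of_complex v)"
  by (rule image_cbox_bij[of _ complex_of_vec]) (auto simp: mem_cbox_vec2 in_cbox_complex_iff)

lemma complex_of_vec_cbox: "complex_of_vec ` cbox x y = cbox (complex_of_vec x) (complex_of_vec y)"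
  by (rule image_cbox_bij[of _ vec_of_complex]) (auto simp: mem_cbox_vec2 in_cbox_complex_iff)

lemma vec_of_pair_cbox: "vec_of_pair ` cbox p q = cbox (vec_of_pair p) (vec_of_pair q)"
  by (cases p; cases q) (rule image_cbox_bij[of _ pair_of_vec]; auto simp: mem_cbox_vec2 cbox_Pair_eq)

lemma pair_of_vec_cbox: "pair_of_vec ` cbox x y = cbox (pair_of_vec x) (pair_of_vec y)"
  by (rule image_cbox_bij[of _ vec_of_pair]) (auto simp: mem_cbox_vec2 cbox_Pair_iff pair_of_vec_def)

lemma content_vec_of_complex_cbox:
  "content (vec_of_complex ` cbox u v) = content (cbox u v)"
proof -
  have "cbox (vec_of_complex u) (vec_of_complex v) = {} \<longleftrightarrow> cbox u v = {}"
    using vec_of_complex_cbox[of u v] by auto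
  then show ?thesis
    by (simp add: vec_of_complex_cbox content_cbox_vec2 content_cbox_if Basis_complex_def
        inner_complex_def)
qed

lemma content_vec_of_pair_cbox:
  "content (vec_of_pair ` cbox p q) = content (cbox p q)"
proof -
  have "cbox (vec_of_pair p) (vec_of_pair q) = {} \<longleftrightarrow> cbox p q = {}"
    using vec_of_pair_cbox[of p q] by auto
  then show ?thesis
    by (cases p, cases q) (simp add: vec_of_pair_cbox content_cbox_vec2 content_Pair cbox_Pair_eq_0)
qed

lemma has_integral_transfer:
  fixes T :: "'a::euclidean_space \<Rightarrow> 'b::euclidean_space" and f :: "'b \<Rightarrow> 'c::banach"
  assumes inverse: "\<And>y. T (T' y) = y" "\<And>x. T' (T x) = x"
    and cont: "\<And>x. isCont T x"
    and boxes: "\<And>u v. \<exists>w z. T ` cbox u v = cbox w z" "\<And>u v. \<exists>w z. T' ` cbox u v = cbox w z"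
    and content: "\<And>u v. content (T ` cbox u v) = content (cbox u v)"
    and "bounded S" and f: "(f has_integral i) S"
  shows "((f \<circ> T) has_integral i) (T' ` S)"
proof -
  obtain a b where ab: "S \<subseteq> cbox a b"
    using \<open>bounded S\<close> bounded_subset_cbox_symmetric by metis
  have "((\<lambda>x. if x \<in> S then f x else 0) has_integral i) (cbox a b)"
    using has_integral_restrict[OF ab] f by blast
  from has_integral_twiddle[where r=1, OF _ inverse(2,1) cont boxes _ this]
  have "((\<lambda>x. if T x \<in> S then f (T x) else 0) has_integral i) (T' ` cbox a b)"
    using content by simp
  moreover have "T x \<in> S \<longleftrightarrow> x \<in> T' ` S" for x
    by (metis inverse image_iff)
  ultimately have "((\<lambda>x. if x \<in> T' ` S then f (T x) else 0) has_integral i) (T' ` cbox a b)"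
    by simp
  moreover have "T' ` S \<subseteq> T' ` cbox a b"
    using ab by blast
  ultimately show ?thesis
    by (simp add: has_integral_restrict o_def)
qed

lemma has_integral_complex_of_vec:
  fixes F :: "real^2 \<Rightarrow> 'c::banach"
  assumes "bounded S" "(F has_integral i) S"
  shows "((F \<circ> vec_of_complex) has_integral i) (complex_of_vec ` S)"
  using linear_vec_of_complex vec_of_complex_cbox complex_of_vec_cbox content_vec_of_complex_cbox
  by (intro has_integral_transfer[OF _ _ _ _ _ _ assms])
     (auto intro: linear_continuous_at simp: linear_conv_bounded_linear)

lemma has_integral_pair_of_vec:
  fixes F :: "real^2 \<Rightarrow> 'c::banach"
  assumes "(F has_integral i) (cbox (vec_of_pair p) (vec_of_pair q))"
  shows "((F \<circ> vec_of_pair) has_integral i) (cbox p q)"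
proof -
  have "((F \<circ> vec_of_pair) has_integral i) (pair_of_vec ` cbox (vec_of_pair p) (vec_of_pair q))"
  proof (rule has_integral_transfer[OF _ _ _ _ _ _ _ assms])
    show "isCont vec_of_pair x" for x
      using linear_vec_of_pair by (simp add: linear_continuous_at linear_conv_bounded_linear)
    show "\<exists>w z. pair_of_vec ` cbox u v = cbox w z" for u v
      using pair_of_vec_cbox by blast
  qed (use vec_of_pair_cbox content_vec_of_pair_cbox in auto)
  then show ?thesis
    by (simp add: pair_of_vec_cbox)
qed

lemma rcis_conv_exp: "rcis r \<theta> = complex_of_real r * exp (\<i> * complex_of_real \<theta>)"
  by (simp add: rcis_def cis_conv_exp)

lemma has_vector_derivative_rcis_radius:
  "((\<lambda>r. rcis r \<theta>) has_vector_derivative cis \<theta>) (at r within X)"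
  unfolding rcis_def by (auto intro!: derivative_eq_intros)

lemma has_vector_derivative_rcis_angle:
  "((\<lambda>\<theta>. rcis r \<theta>) has_vector_derivative \<i> * rcis r \<theta>) (at \<theta> within X)"
proof -
  have "((\<lambda>w. complex_of_real r * exp (\<i> * w)) has_field_derivative \<i> * rcis r \<theta>) (at (complex_of_real \<theta>))"
    by (auto intro!: derivative_eq_intros simp: rcis_def cis_conv_exp)
  from has_vector_derivative_real_field[OF this] show ?thesis
    by (simp add: rcis_def cis_conv_exp)
qed

definition polar :: "real^2 \<Rightarrow> real^2" where
  "polar x = vec_of_complex (rcis (x$2) (x$1))"

definition polar_derivative :: "real^2 \<Rightarrow> real^2 \<Rightarrow> real^2" where
  "polar_derivative x h = vec_of_complex (h$2 *\<^sub>R cis (x$1) + h$1 *\<^sub>R (\<i> * rcis (x$2) (x$1)))"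

lemma complex_of_vec_polar [simp]: "complex_of_vec (polar x) = rcis (x$2) (x$1)"
  by (simp add: polar_def)

lemma has_derivative_polar:
  fixes x :: "real^2"
  shows "(polar has_derivative polar_derivative x) (at x within S)"
proof -
  have "((\<lambda>x. rcis (x$2) (x$1)) has_derivative (\<lambda>h. h$2 *\<^sub>R cis (x$1) + h$1 *\<^sub>R (\<i> * rcis (x$2) (x$1))))
          (at x within S)"
  proof -
    have coord: "((\<lambda>x. x$i) has_derivative (\<lambda>h. h$i)) (at x within S)" for i
      by (rule bounded_linear_imp_has_derivative[OF bounded_linear_vec_nth])
    have angle: "((\<lambda>x. \<i> * complex_of_real (x$1)) has_derivative (\<lambda>h. \<i> * complex_of_real (h$1)))
                   (at x within S)"
      by (auto intro!: derivative_eq_intros coord)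
    have "((\<lambda>x. exp (\<i> * complex_of_real (x$1))) has_derivative
            (\<lambda>h. exp (\<i> * complex_of_real (x$1)) * (\<i> * complex_of_real (h$1)))) (at x within S)"
      using has_derivative_compose[OF angle DERIV_exp[THEN has_field_derivative_imp_has_derivative]]
      by simp
    then show ?thesis
      unfolding rcis_def cis_conv_exp
      by (auto intro!: derivative_eq_intros coord simp: scaleR_conv_of_real algebra_simps)
  qed
  moreover have "bounded_linear vec_of_complex"
    using linear_vec_of_complex by (simp add: linear_conv_bounded_linear)
  ultimately show ?thesis
    unfolding polar_def polar_derivative_def[abs_def] using bounded_linear.has_derivative by blast
qed

lemma abs_det_polar_derivative:
  fixes x :: "real^2"
  shows "\<bar>det (matrix (polar_derivative x))\<bar> = \<bar>x$2\<bar>"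
proof -
  have "det (matrix (polar_derivative x)) = - x$2"
    by (simp add: det_2 matrix_def axis_def polar_derivative_def algebra_simps)
      (simp add: mult.assoc[symmetric] distrib_right[symmetric])
  then show ?thesis
    by simp
qed

definition polar_rectangle :: "real \<Rightarrow> real \<Rightarrow> (real^2) set" where
  "polar_rectangle s1 s2 = {x. 0 \<le> x$1 \<and> x$1 < 2*pi \<and> s1 < x$2 \<and> x$2 \<le> s2}"

lemma polar_rectangle_subset_cbox:
  "polar_rectangle s1 s2 \<subseteq> cbox (vec_of_pair (0, s1)) (vec_of_pair (2*pi, s2))"
  by (auto simp: polar_rectangle_def mem_cbox_vec2)

lemma negligible_cbox_diff_polar_rectangle:
  "negligible (cbox (vec_of_pair (0, s1)) (vec_of_pair (2*pi, s2)) - polar_rectangle s1 s2)"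
proof (rule negligible_subset[OF negligible_frontier_interval])
  show "cbox (vec_of_pair (0, s1)) (vec_of_pair (2*pi, s2)) - polar_rectangle s1 s2 \<subseteq>
        cbox (vec_of_pair (0, s1)) (vec_of_pair (2*pi, s2)) - box (vec_of_pair (0, s1)) (vec_of_pair (2*pi, s2))"
    by (auto simp: polar_rectangle_def mem_cbox_vec2 mem_box_cart(1) forall_2)
qed

lemma polar_rectangle_lebesgue: "polar_rectangle s1 s2 \<in> sets lebesgue"
proof -
  have "polar_rectangle s1 s2 = cbox (vec_of_pair (0, s1)) (vec_of_pair (2*pi, s2)) -
          (cbox (vec_of_pair (0, s1)) (vec_of_pair (2*pi, s2)) - polar_rectangle s1 s2)"
    using polar_rectangle_subset_cbox by blast
  then show ?thesis
    using sets.Diff[OF _ negligible_imp_sets[OF negligible_cbox_diff_polar_rectangle]]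
    by (metis lmeasurable_cbox fmeasurableD)
qed

lemma inj_on_polar: "0 \<le> s1 \<Longrightarrow> inj_on polar (polar_rectangle s1 s2)"
proof
  fix x y assume "0 \<le> s1" and x: "x \<in> polar_rectangle s1 s2" and y: "y \<in> polar_rectangle s1 s2"
    and "polar x = polar y"
  from arg_cong[OF \<open>polar x = polar y\<close>, of complex_of_vec]
  have eq: "rcis (x$2) (x$1) = rcis (y$2) (y$1)"
    by simp
  from arg_cong[OF eq, of cmod] have "\<bar>x$2\<bar> = \<bar>y$2\<bar>"
    by (simp only: complex_mod_rcis)
  then have "x$2 = y$2"
    using x y \<open>0 \<le> s1\<close> by (auto simp: polar_rectangle_def)
  moreover have "x$1 = y$1"
    using x y \<open>0 \<le> s1\<close> eq Arg2pi_unique[of "x$2" "x$1", OF rcis_conv_exp[symmetric]]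
      Arg2pi_unique[of "y$2" "y$1", OF rcis_conv_exp[symmetric]] by (auto simp: polar_rectangle_def)
  ultimately show "x = y"
    by (simp add: vec2_eq_iff)
qed

lemma polar_image_polar_rectangle:
  assumes "0 \<le> s1"
  shows "polar ` polar_rectangle s1 s2 = vec_of_complex ` (cball 0 s2 - cball 0 s1)"
proof (intro subset_antisym subsetI)
  fix y assume "y \<in> polar ` polar_rectangle s1 s2"
  then show "y \<in> vec_of_complex ` (cball 0 s2 - cball 0 s1)"
    using assms by (auto simp: polar_def polar_rectangle_def)
next
  fix y assume "y \<in> vec_of_complex ` (cball 0 s2 - cball 0 s1)"
  then obtain z where z: "z \<in> cball 0 s2 - cball 0 s1" and "y = vec_of_complex z"
    by blast
  then have "y = polar (vec_of_pair (Arg2pi z, cmod z))"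
    using Arg2pi_eq[of z] by (simp add: polar_def rcis_conv_exp)
  moreover have "vec_of_pair (Arg2pi z, cmod z) \<in> polar_rectangle s1 s2"
    using z Arg2pi[of z] by (auto simp: polar_rectangle_def)
  ultimately show "y \<in> polar ` polar_rectangle s1 s2"
    by blast
qed

lemma has_integral_polar:
  fixes F :: "real^2 \<Rightarrow> real"
  assumes S: "S \<in> sets lebesgue" and inj: "inj_on polar S" and nonneg: "\<And>x. x \<in> S \<Longrightarrow> 0 \<le> x$2"
    and int: "(\<lambda>x. x$2 * F (polar x)) absolutely_integrable_on S"
  shows "(F has_integral integral S (\<lambda>x. x$2 * F (polar x))) (polar ` S)"
proof -
  define I :: "real^1" where "I = vec (integral S (\<lambda>x. x$2 * F (polar x)))"
  have jacobian: "\<bar>det (matrix (polar_derivative x))\<bar> *\<^sub>R (vec (F (polar x)) :: real^1) =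
                   vec (x$2 * F (polar x))" if "x \<in> S" for x
    using nonneg[OF that] by (simp add: abs_det_polar_derivative vec_scaleR)
  have vint: "(\<lambda>x. vec (x$2 * F (polar x)) :: real^1) absolutely_integrable_on S"
    using int by (simp add: absolutely_integrable_on_1_iff)
  have "(\<lambda>x. \<bar>det (matrix (polar_derivative x))\<bar> *\<^sub>R (vec (F (polar x)) :: real^1))
          absolutely_integrable_on S \<and>
        integral S (\<lambda>x. \<bar>det (matrix (polar_derivative x))\<bar> *\<^sub>R vec (F (polar x))) = I"
  proof
    show "(\<lambda>x. \<bar>det (matrix (polar_derivative x))\<bar> *\<^sub>R (vec (F (polar x)) :: real^1))
            absolutely_integrable_on S"
      by (rule absolutely_integrable_spike[OF vint negligible_empty]) (simp add: jacobian)
    have "integral S (\<lambda>x. \<bar>det (matrix (polar_derivative x))\<bar> *\<^sub>R (vec (F (polar x)) :: real^1)) =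
          integral S (\<lambda>x. vec (x$2 * F (polar x)))"
      by (rule integral_cong) (simp add: jacobian)
    then show "integral S (\<lambda>x. \<bar>det (matrix (polar_derivative x))\<bar> *\<^sub>R (vec (F (polar x)) :: real^1)) = I"
      by (simp add: I_def integral_on_1_eq)
  qed
  then have "(\<lambda>y. vec (F y) :: real^1) absolutely_integrable_on polar ` S \<and>
        integral (polar ` S) (\<lambda>y. vec (F y) :: real^1) = I"
    using has_absolute_integral_change_of_variables[OF S has_derivative_polar inj] by blast
  then have "(F absolutely_integrable_on polar ` S) \<and> integral (polar ` S) F = integral S (\<lambda>x. x$2 * F (polar x))"
    by (simp add: absolutely_integrable_on_1_iff integral_on_1_eq I_def)
  then show ?thesis
    using set_lebesgue_integral_eq_integral(1) integrable_integral by metis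
qed

lemma has_integral_annulus:
  fixes f :: "complex \<Rightarrow> real"
  assumes "0 < s1" "s1 < s2" and cont: "continuous_on {z. s1 \<le> cmod z \<and> cmod z \<le> s2} f"
  shows "(f has_integral integral (cbox (0, s1) (2*pi, s2)) (\<lambda>(\<theta>, r). r * f (rcis r \<theta>)))
           (cball 0 s2 - cball 0 s1)"
proof -
  define B where "B = cbox (vec_of_pair (0, s1)) (vec_of_pair (2*pi, s2))"
  define H :: "real^2 \<Rightarrow> real" where "H = (\<lambda>x. x$2 * f (rcis (x$2) (x$1)))"
  have "continuous_on B (\<lambda>x. f (rcis (x$2) (x$1)))"
    using \<open>0 < s1\<close>
    by (intro continuous_on_compose2[OF cont] continuous_intros continuous_on_component)
      (auto simp: B_def mem_cbox_vec2)
  then have "continuous_on B H"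
    unfolding H_def by (intro continuous_intros continuous_on_component)
  then have "H absolutely_integrable_on polar_rectangle s1 s2"
    using set_integrable_subset[OF _ polar_rectangle_lebesgue polar_rectangle_subset_cbox]
      absolutely_integrable_continuous unfolding B_def by blast
  then have "((f \<circ> complex_of_vec) has_integral integral (polar_rectangle s1 s2) H)
               (vec_of_complex ` (cball 0 s2 - cball 0 s1))"
    using has_integral_polar[OF polar_rectangle_lebesgue inj_on_polar, of s1 s2 "f \<circ> complex_of_vec"]
      polar_image_polar_rectangle \<open>0 < s1\<close>
    by (auto simp: polar_rectangle_def H_def)
  moreover have "bounded (vec_of_complex ` (cball 0 s2 - cball 0 s1))"
    using linear_vec_of_complex
    by (intro bounded_linear_image bounded_diff bounded_cball) (simp add: linear_conv_bounded_linear)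
  ultimately have "(f has_integral integral (polar_rectangle s1 s2) H) (cball 0 s2 - cball 0 s1)"
    using has_integral_complex_of_vec by (fastforce simp: image_comp o_def)
  moreover have "integral (polar_rectangle s1 s2) H = integral B H"
    unfolding B_def
    by (rule integral_subset_negligible[OF polar_rectangle_subset_cbox negligible_cbox_diff_polar_rectangle])
  moreover have "H \<circ> vec_of_pair = (\<lambda>(\<theta>, r). r * f (rcis r \<theta>))"
    by (auto simp: H_def fun_eq_iff)
  moreover have "((H \<circ> vec_of_pair) has_integral integral B H) (cbox (0, s1) (2*pi, s2))"
    using \<open>continuous_on B H\<close> unfolding B_def
    by (intro has_integral_pair_of_vec integrable_integral integrable_continuous)
  ultimately show ?thesis
    by (simp add: integral_unique)
qed

section \<open>Functions with logarithmic growth at the origin\<close>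

lemma diff_le_of_log_derivative_le:
  fixes G \<Psi> :: "real \<Rightarrow> real"
  assumes "0 < x" "x \<le> y"
    and deriv: "\<And>r. x \<le> r \<Longrightarrow> r \<le> y \<Longrightarrow> (G has_real_derivative \<Psi> r / r) (at r)"
    and bound: "\<And>r. x \<le> r \<Longrightarrow> r \<le> y \<Longrightarrow> \<Psi> r \<le> c"
  shows "G y - G x \<le> c * (ln y - ln x)"
proof -
  have "G y - c * ln y \<le> G x - c * ln x"
  proof (rule DERIV_nonpos_imp_nonincreasing[OF \<open>x \<le> y\<close>])
    fix r assume r: "x \<le> r" "r \<le> y"
    then have "((\<lambda>r. G r - c * ln r) has_real_derivative \<Psi> r / r - c * inverse r) (at r)"
      using \<open>0 < x\<close> by (intro DERIV_diff deriv DERIV_cmult DERIV_ln) auto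
    moreover have "\<Psi> r / r - c * inverse r \<le> 0"
      using bound[OF r] r \<open>0 < x\<close> by (simp add: field_simps)
    ultimately show "\<exists>d. ((\<lambda>r. G r - c * ln r) has_real_derivative d) (at r) \<and> d \<le> 0"
      by blast
  qed
  then show ?thesis
    by (simp add: algebra_simps)
qed

lemma eventually_mult_ln_less_at_right_0:
  assumes "0 < k"
  shows "eventually (\<lambda>x. k * ln x < K) (at_right (0::real))"
proof -
  have "eventually (\<lambda>x. ln x \<le> K / k - 1) (at_right 0)"
    using ln_at_0 unfolding filterlim_at_bot by blast
  then show ?thesis
  proof eventually_elim
    case (elim x)
    then have "k * ln x \<le> k * (K / k - 1)"
      using assms by (intro mult_left_mono) auto
    also have "\<dots> < K"
      using assms by (simp add: field_simps)
    finally show ?case .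
  qed
qed

lemma subpolynomial_ln_eventually_le:
  assumes "subpolynomial \<mu>" "0 < n"
  shows "eventually (\<lambda>r. ln (\<mu> (1 / r)) \<le> n * ln (1 / r)) (at_right 0)"
proof -
  have pos: "\<And>x. x > 0 \<Longrightarrow> \<mu> x > 0" and lim: "((\<lambda>x. \<mu> x / x powr n) \<longlongrightarrow> 0) at_top"
    using assms unfolding subpolynomial_def by auto
  have "eventually (\<lambda>x. \<mu> x / x powr n < 1) at_top"
    using order_tendstoD(2)[OF lim] by simp
  then have "eventually (\<lambda>x. ln (\<mu> x) \<le> n * ln x) at_top"
    using eventually_gt_at_top[of 0]
  proof eventually_elim
    case (elim x)
    then have "\<mu> x < x powr n"
      by (simp add: divide_less_eq)
    then have "ln (\<mu> x) < ln (x powr n)"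
      using pos[of x] elim by (subst ln_less_cancel_iff) auto
    then show ?case
      using elim by (simp add: ln_powr)
  qed
  moreover have "filterlim (\<lambda>r::real. 1 / r) at_top (at_right 0)"
    using filterlim_inverse_at_top_right by (simp add: inverse_eq_divide)
  ultimately show ?thesis
    by (rule eventually_compose_filterlim)
qed

lemma log_derivative_lower_bound:
  fixes G \<Psi> :: "real \<Rightarrow> real"
  assumes "0 < s"
    and deriv: "\<And>r. 0 < r \<Longrightarrow> r < s \<Longrightarrow> (G has_real_derivative \<Psi> r / r) (at r)"
    and mono: "\<And>x y. 0 < x \<Longrightarrow> x \<le> y \<Longrightarrow> y \<le> s \<Longrightarrow> \<Psi> x \<le> \<Psi> y"
    and upper: "\<And>\<delta>. 0 < \<delta> \<Longrightarrow> eventually (\<lambda>r. G r + a * ln r \<le> \<delta> * ln (1 / r)) (at_right 0)"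
    and "0 < r0" "r0 \<le> s"
  shows "- a \<le> \<Psi> r0"
proof (rule ccontr)
  define c where "c = \<Psi> r0"
  define \<delta> where "\<delta> = (- a - c) / 2"
  assume "\<not> - a \<le> \<Psi> r0"
  then have "0 < \<delta>"
    by (simp add: \<delta>_def c_def)
  define r1 where "r1 = r0 / 2"
  have r1: "0 < r1" "r1 < s" "r1 \<le> r0"
    using \<open>0 < r0\<close> \<open>r0 \<le> s\<close> by (auto simp: r1_def)
  have "eventually (\<lambda>x. x \<in> {0<..<r1} \<and> G x + a * ln x \<le> \<delta> * ln (1 / x) \<and>
                       \<delta> * ln x < G r1 - c * ln r1) (at_right 0)"
    using \<open>0 < \<delta>\<close> r1
    by (intro eventually_conj upper eventually_mult_ln_less_at_right_0 eventually_at_right_real) auto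
  then obtain x where "x \<in> {0<..<r1}" and x: "G x + a * ln x \<le> \<delta> * ln (1 / x)"
    and far: "\<delta> * ln x < G r1 - c * ln r1"
    using eventually_happens'[OF trivial_limit_at_right_real] by blast
  then have "0 < x" "x \<le> r1"
    by auto
  have "G r1 - G x \<le> c * (ln r1 - ln x)"
    using \<open>0 < x\<close> r1 \<open>r0 \<le> s\<close>
    by (intro diff_le_of_log_derivative_le[OF \<open>0 < x\<close> \<open>x \<le> r1\<close>, where \<Psi>=\<Psi>] deriv)
      (auto simp: c_def intro!: mono)
  then have "G r1 - c * ln r1 \<le> G x - c * ln x"
    by (simp add: algebra_simps)
  also have "\<dots> \<le> \<delta> * ln x"
    using x \<open>0 < x\<close> by (simp add: ln_div \<delta>_def field_simps)
  finally show False
    using far by simp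
qed

lemma log_derivative_upper_bound:
  fixes G \<Psi> :: "real \<Rightarrow> real"
  assumes "0 < s"
    and deriv: "\<And>r. 0 < r \<Longrightarrow> r < s \<Longrightarrow> (G has_real_derivative \<Psi> r / r) (at r)"
    and lower: "\<And>\<delta>. 0 < \<delta> \<Longrightarrow> eventually (\<lambda>r. - (\<delta> * ln (1 / r)) \<le> G r + a * ln r) (at_right 0)"
    and "0 < \<epsilon>"
  shows "\<exists>r. 0 < r \<and> r < s \<and> \<Psi> r \<le> - a + \<epsilon>"
proof (rule ccontr)
  define c where "c = - a + \<epsilon>"
  assume "\<nexists>r. 0 < r \<and> r < s \<and> \<Psi> r \<le> - a + \<epsilon>"
  then have large: "\<And>r. 0 < r \<Longrightarrow> r < s \<Longrightarrow> c < \<Psi> r"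
    by (force simp: c_def)
  define r1 where "r1 = s / 2"
  have r1: "0 < r1" "r1 < s"
    using \<open>0 < s\<close> by (auto simp: r1_def)
  have "eventually (\<lambda>x. x \<in> {0<..<r1} \<and> - (\<epsilon> / 2 * ln (1 / x)) \<le> G x + a * ln x \<and>
                       \<epsilon> / 2 * ln x < - G r1 + c * ln r1) (at_right 0)"
    using \<open>0 < \<epsilon>\<close> r1
    by (intro eventually_conj lower eventually_mult_ln_less_at_right_0 eventually_at_right_real) auto
  then obtain x where "x \<in> {0<..<r1}" and x: "- (\<epsilon> / 2 * ln (1 / x)) \<le> G x + a * ln x"
    and far: "\<epsilon> / 2 * ln x < - G r1 + c * ln r1"
    using eventually_happens'[OF trivial_limit_at_right_real] by blast
  then have "0 < x" "x \<le> r1"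
    by auto
  have "(- G) r1 - (- G) x \<le> - c * (ln r1 - ln x)"
    using \<open>0 < x\<close> r1 deriv large
    by (intro diff_le_of_log_derivative_le[OF \<open>0 < x\<close> \<open>x \<le> r1\<close>, where \<Psi>="\<lambda>r. - \<Psi> r"])
      (auto intro!: derivative_eq_intros simp: less_imp_le)
  then show False
    using x far \<open>0 < x\<close> by (simp add: ln_div c_def algebra_simps)
qed

lemma log_derivative_limit:
  fixes G \<Psi> :: "real \<Rightarrow> real"
  assumes "0 < s"
    and deriv: "\<And>r. 0 < r \<Longrightarrow> r < s \<Longrightarrow> (G has_real_derivative \<Psi> r / r) (at r)"
    and mono: "\<And>x y. 0 < x \<Longrightarrow> x \<le> y \<Longrightarrow> y \<le> s \<Longrightarrow> \<Psi> x \<le> \<Psi> y"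
    and small: "\<And>\<delta>. 0 < \<delta> \<Longrightarrow> eventually (\<lambda>r. \<bar>G r + a * ln r\<bar> \<le> \<delta> * ln (1 / r)) (at_right 0)"
  shows "(\<Psi> \<longlongrightarrow> - a) (at_right 0)" and "\<And>r. 0 < r \<Longrightarrow> r \<le> s \<Longrightarrow> - a \<le> \<Psi> r"
proof -
  have upper: "eventually (\<lambda>r. G r + a * ln r \<le> \<delta> * ln (1 / r)) (at_right 0)"
    and lower: "eventually (\<lambda>r. - (\<delta> * ln (1 / r)) \<le> G r + a * ln r) (at_right 0)" if "0 < \<delta>" for \<delta>
    using small[OF that] by (auto elim!: eventually_mono)
  show lower_bound: "- a \<le> \<Psi> r" if "0 < r" "r \<le> s" for r
    using log_derivative_lower_bound[OF \<open>0 < s\<close> deriv mono upper that] by blast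
  show "(\<Psi> \<longlongrightarrow> - a) (at_right 0)"
  proof (rule tendstoI)
    fix \<epsilon> :: real assume "0 < \<epsilon>"
    then obtain r1 where r1: "0 < r1" "r1 < s" "\<Psi> r1 \<le> - a + \<epsilon> / 2"
      using log_derivative_upper_bound[OF \<open>0 < s\<close> deriv lower, of "\<epsilon> / 2"] by auto
    show "eventually (\<lambda>r. dist (\<Psi> r) (- a) < \<epsilon>) (at_right 0)"
      using eventually_at_right_real[OF \<open>0 < r1\<close>]
    proof eventually_elim
      case (elim r)
      then have "- a \<le> \<Psi> r" "\<Psi> r \<le> \<Psi> r1"
        using lower_bound mono r1 by auto
      then show ?case
        using r1 \<open>0 < \<epsilon>\<close> by (simp add: dist_real_def)
    qed
  qed
qed

section \<open>Smooth functions on a punctured disc\<close>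

lemma integrable_on_ball_if_continuous_on_cball:
  fixes f :: "'a::euclidean_space \<Rightarrow> real"
  assumes "continuous_on (cball c t) f"
  shows "f integrable_on ball c t"
proof -
  have "set_integrable lborel (cball c t) f"
    unfolding set_integrable_def using assms by (intro borel_integrable_compact) auto
  then have "set_integrable lborel (ball c t) f"
    by (rule set_integrable_subset) auto
  then show ?thesis
    by (rule set_borel_integral_eq_integral(1))
qed

lemma nonneg_if_small_ball_integrals_nonneg:
  fixes f :: "'a::euclidean_space \<Rightarrow> real"
  assumes "open U" "z \<in> U" and cont: "continuous_on U f"
    and balls: "\<And>t. 0 < t \<Longrightarrow> cball z t \<subseteq> U \<Longrightarrow> 0 \<le> integral (ball 0 t) (\<lambda>w. f (z + w))"
  shows "0 \<le> f z"
proof (rule ccontr)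
  assume "\<not> 0 \<le> f z"
  then have neg: "f z < 0"
    by simp
  have "isCont f z"
    using cont \<open>open U\<close> \<open>z \<in> U\<close> continuous_on_eq_continuous_at by blast
  then obtain d where "d > 0" and d: "\<And>w. dist w z < d \<Longrightarrow> dist (f w) (f z) < - f z / 2"
    using neg unfolding continuous_at_eps_delta by (metis neg_0_less_iff_less half_gt_zero)
  obtain e where "e > 0" "cball z e \<subseteq> U"
    using \<open>open U\<close> \<open>z \<in> U\<close> open_contains_cball by blast
  define t where "t = min e d / 2"
  have "t > 0" "cball z t \<subseteq> U"
    using \<open>d > 0\<close> \<open>e > 0\<close> \<open>cball z e \<subseteq> U\<close> by (auto simp: t_def)
  have near: "z + w \<in> U \<and> f (z + w) \<le> f z / 2" if "w \<in> cball 0 t" for w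
    using that d[of "z + w"] \<open>d > 0\<close> \<open>cball z t \<subseteq> U\<close>
    by (auto simp: t_def dist_norm dist_real_def abs_less_iff)
  have "continuous_on (cball 0 t) (\<lambda>w. f (z + w))"
    using \<open>cball z t \<subseteq> U\<close> by (intro continuous_on_compose2[OF cont] continuous_intros) auto
  then have "(\<lambda>w. f (z + w)) integrable_on ball 0 t"
    by (rule integrable_on_ball_if_continuous_on_cball)
  moreover have const: "((\<lambda>w::'a. f z / 2) has_integral f z / 2 * content (ball (0::'a) t)) (ball 0 t)"
    using has_integral_mult_right[OF has_integral_measure_lborel[of "ball (0::'a) t",
          OF borel_open[OF open_ball] emeasure_bounded_finite[OF bounded_ball]], of "f z / 2"]
    by simp
  ultimately have "integral (ball 0 t) (\<lambda>w. f (z + w)) \<le> f z / 2 * content (ball (0::'a) t)"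
    using near by (intro has_integral_le[OF integrable_integral const]) auto
  also have "\<dots> < 0"
    using neg content_ball_pos[OF \<open>t > 0\<close>, of "0::'a"] by (simp add: mult_neg_pos)
  finally show False
    using balls[OF \<open>t > 0\<close> \<open>cball z t \<subseteq> U\<close>] by simp
qed

locale smooth_derivatives =
  fixes U :: "complex set" and D :: "bool list \<Rightarrow> complex \<Rightarrow> real"
  assumes open_U: "open U"
    and has_derivative_D:
      "\<And>l z. z \<in> U \<Longrightarrow> (D l has_derivative (\<lambda>h. Re h * D (True # l) z + Im h * D (False # l) z)) (at z)"
begin

lemma continuous_on_D: "continuous_on U (D l)"
  using has_derivative_D has_derivative_continuous continuous_at_imp_continuous_on by blast

lemma has_real_derivative_D_comp:
  assumes "(c has_vector_derivative c') (at t within X)" and "c t \<in> U"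
  shows "((\<lambda>t. D l (c t)) has_real_derivative Re c' * D (True # l) (c t) + Im c' * D (False # l) (c t))
           (at t within X)"
proof -
  have "(c has_derivative (\<lambda>h. h *\<^sub>R c')) (at t within X)"
    using assms(1) by (simp add: has_vector_derivative_def)
  from has_derivative_compose[OF this has_derivative_D[OF assms(2), of l]] show ?thesis
    unfolding has_field_derivative_def by (rule has_derivative_eq_rhs) (auto simp: algebra_simps)
qed

lemma deriv_along_line_eq:
  assumes f: "\<And>w. w \<in> U \<Longrightarrow> f w = D l w" and "z \<in> U"
  shows "deriv (\<lambda>t. f (z + of_real t * v)) 0 = Re v * D (True # l) z + Im v * D (False # l) z"
proof -
  have "((\<lambda>t::real. z + of_real t * v) has_vector_derivative v) (at 0)"
    using has_vector_derivative_real_field[of "\<lambda>w. z + w * v" v 0] by (auto intro!: derivative_eq_intros)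
  from has_real_derivative_D_comp[OF this, of l]
  have "((\<lambda>t. D l (z + of_real t * v)) has_real_derivative Re v * D (True # l) z + Im v * D (False # l) z)
          (at 0)"
    using \<open>z \<in> U\<close> by simp
  moreover have "open ((\<lambda>t::real. z + of_real t * v) -` U)"
    using open_U by (intro open_vimage continuous_intros)
  ultimately have "((\<lambda>t. f (z + of_real t * v)) has_real_derivative Re v * D (True # l) z + Im v * D (False # l) z)
               (at 0)"
    by (rule has_field_derivative_transform_within_open) (use \<open>z \<in> U\<close> f in auto)
  then show ?thesis
    by (rule DERIV_imp_deriv)
qed

lemma partial_x_eq:
  "(\<And>w. w \<in> U \<Longrightarrow> f w = D l w) \<Longrightarrow> z \<in> U \<Longrightarrow> partial_x f z = D (True # l) z"
  using deriv_along_line_eq[of f l z 1] by (simp add: partial_x_def)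

lemma partial_y_eq:
  "(\<And>w. w \<in> U \<Longrightarrow> f w = D l w) \<Longrightarrow> z \<in> U \<Longrightarrow> partial_y f z = D (False # l) z"
  using deriv_along_line_eq[of f l z \<i>] by (simp add: partial_y_def mult.commute)

lemma omega_density_eq:
  assumes "\<And>w. w \<in> U \<Longrightarrow> g w = D [] w" and "z \<in> U"
  shows "omega_density g z = (D [True, True] z + D [False, False] z) / (2 * pi)"
proof -
  have "partial_x (partial_x g) z = D [True, True] z"
    using partial_x_eq[of "partial_x g" "[True]"] partial_x_eq[of g "[]"] assms by simp
  moreover have "partial_y (partial_y g) z = D [False, False] z"
    using partial_y_eq[of "partial_y g" "[False]"] partial_y_eq[of g "[]"] assms by simp
  ultimately show ?thesis
    by (simp add: omega_density_def laplacian_def)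
qed

text \<open>Semipositivity tested on the translations \<open>w \<mapsto> z + w\<close> of small discs.\<close>
lemma laplacian_nonneg:
  assumes "\<And>w. w \<in> U \<Longrightarrow> g w = D [] w" and "semipositive_on U g" and "z \<in> U"
  shows "0 \<le> D [True, True] z + D [False, False] z"
proof -
  have "0 \<le> (D [True, True] z + D [False, False] z) / (2 * pi)"
  proof (rule nonneg_if_small_ball_integrals_nonneg[OF open_U \<open>z \<in> U\<close>])
    show "continuous_on U (\<lambda>w. (D [True, True] w + D [False, False] w) / (2 * pi))"
      by (intro continuous_intros continuous_on_D) simp
    fix t :: real assume "0 < t" "cball z t \<subseteq> U"
    have "(\<lambda>w. z + w) ` cball 0 t \<subseteq> U"
      using \<open>cball z t \<subseteq> U\<close> by (auto simp: dist_norm)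
    moreover have "continuous_on (cball 0 t) (\<lambda>w. z + w)" "(\<lambda>w. z + w) holomorphic_on ball 0 t"
      by (intro continuous_intros holomorphic_intros)+
    ultimately have "0 \<le> integral (ball 0 t) (\<lambda>w. omega_density g (z + w) * (cmod (deriv (\<lambda>w. z + w) w))\<^sup>2)"
      using \<open>semipositive_on U g\<close> \<open>0 < t\<close> unfolding semipositive_on_def by blast
    also have "\<dots> = integral (ball 0 t) (\<lambda>w. (D [True, True] (z + w) + D [False, False] (z + w)) / (2 * pi))"
    proof (rule integral_cong)
      fix w :: complex assume "w \<in> ball 0 t"
      then have "z + w \<in> U"
        using \<open>cball z t \<subseteq> U\<close> by (auto simp: dist_norm)
      moreover have "deriv (\<lambda>w. z + w) w = 1"
        by (rule DERIV_imp_deriv) (auto intro!: derivative_eq_intros)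
      ultimately show "omega_density g (z + w) * (cmod (deriv (\<lambda>w. z + w) w))\<^sup>2 =
                       (D [True, True] (z + w) + D [False, False] (z + w)) / (2 * pi)"
        using omega_density_eq[OF assms(1)] by simp
    qed
    finally show "0 \<le> integral (ball 0 t) (\<lambda>w. (D [True, True] (z + w) + D [False, False] (z + w)) / (2 * pi))" .
  qed
  then show ?thesis
    using pi_gt_zero by (simp add: zero_le_divide_iff)
qed

definition radial_derivative :: "bool list \<Rightarrow> real \<Rightarrow> real \<Rightarrow> real" where
  "radial_derivative l r \<theta> = cos \<theta> * D (True # l) (rcis r \<theta>) + sin \<theta> * D (False # l) (rcis r \<theta>)"

definition tangential_derivative :: "bool list \<Rightarrow> real \<Rightarrow> real \<Rightarrow> real" where
  "tangential_derivative l r \<theta> = cos \<theta> * D (False # l) (rcis r \<theta>) - sin \<theta> * D (True # l) (rcis r \<theta>)"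

lemma has_real_derivative_D_rcis_radius:
  assumes "rcis r \<theta> \<in> U"
  shows "((\<lambda>r. D l (rcis r \<theta>)) has_real_derivative radial_derivative l r \<theta>) (at r within X)"
  using has_real_derivative_D_comp[OF has_vector_derivative_rcis_radius assms]
  by (simp add: radial_derivative_def)

lemma has_real_derivative_D_rcis_angle:
  assumes "rcis r \<theta> \<in> U"
  shows "((\<lambda>\<theta>. D l (rcis r \<theta>)) has_real_derivative r * tangential_derivative l r \<theta>) (at \<theta> within X)"
  using has_real_derivative_D_comp[OF has_vector_derivative_rcis_angle assms]
  by (simp add: tangential_derivative_def algebra_simps)

text \<open>The two summands of the Laplacian in polar coordinates,
  \<open>r \<Delta>g = \<partial>\<^sub>r(r \<partial>\<^sub>r g) + \<partial>\<^sub>\<theta>(r\<^sup>-\<^sup>1 \<partial>\<^sub>\<theta> g)\<close>.\<close>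

definition laplacian_radial_part :: "real \<Rightarrow> real \<Rightarrow> real" where
  "laplacian_radial_part r \<theta> = radial_derivative [] r \<theta> +
     r * (cos \<theta> * radial_derivative [True] r \<theta> + sin \<theta> * radial_derivative [False] r \<theta>)"

definition laplacian_angular_part :: "real \<Rightarrow> real \<Rightarrow> real" where
  "laplacian_angular_part r \<theta> = - radial_derivative [] r \<theta> +
     r * (cos \<theta> * tangential_derivative [False] r \<theta> - sin \<theta> * tangential_derivative [True] r \<theta>)"

lemma has_real_derivative_laplacian_radial_part:
  assumes "rcis r \<theta> \<in> U"
  shows "((\<lambda>r. r * radial_derivative [] r \<theta>) has_real_derivative laplacian_radial_part r \<theta>) (at r within X)"
  unfolding laplacian_radial_part_def radial_derivative_def[of "[]"]
  by (rule derivative_eq_intros has_real_derivative_D_rcis_radius[OF assms] refl)+ simp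

lemma has_real_derivative_laplacian_angular_part:
  assumes "rcis r \<theta> \<in> U"
  shows "((\<lambda>\<theta>. tangential_derivative [] r \<theta>) has_real_derivative laplacian_angular_part r \<theta>) (at \<theta> within X)"
  unfolding laplacian_angular_part_def tangential_derivative_def[of "[]"]
  by (rule derivative_eq_intros has_real_derivative_D_rcis_angle[OF assms] refl)+
     (simp add: radial_derivative_def algebra_simps)

lemma polar_laplacian:
  "laplacian_radial_part r \<theta> + laplacian_angular_part r \<theta> =
   r * (D [True, True] (rcis r \<theta>) + D [False, False] (rcis r \<theta>))"
proof -
  have "laplacian_radial_part r \<theta> + laplacian_angular_part r \<theta> =
     r * ((cos \<theta>)\<^sup>2 + (sin \<theta>)\<^sup>2) * (D [True, True] (rcis r \<theta>) + D [False, False] (rcis r \<theta>))"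
    unfolding laplacian_radial_part_def laplacian_angular_part_def radial_derivative_def
      tangential_derivative_def power2_eq_square
    by algebra
  then show ?thesis
    by simp
qed

lemma continuous_on_D_rcis:
  assumes "continuous_on A \<rho>" "continuous_on A \<phi>" "\<And>x. x \<in> A \<Longrightarrow> rcis (\<rho> x) (\<phi> x) \<in> U"
  shows "continuous_on A (\<lambda>x. D l (rcis (\<rho> x) (\<phi> x)))"
  using assms by (intro continuous_on_compose2[OF continuous_on_D] continuous_intros) auto

end

locale smooth_derivatives_on_punctured_disc = smooth_derivatives +
  fixes s :: real
  assumes radius_pos: "0 < s" and punctured_disc_subset: "cball 0 s - {0} \<subseteq> U"
begin

lemma rcis_in_U: "0 < r \<Longrightarrow> r \<le> s \<Longrightarrow> rcis r \<theta> \<in> U"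
  using punctured_disc_subset by auto

definition flux :: "real \<Rightarrow> real" where
  "flux r = integral {0..2*pi} (\<lambda>\<theta>. r * radial_derivative [] r \<theta>) / (2 * pi)"

definition circle_mean :: "real \<Rightarrow> real" where
  "circle_mean r = integral {0..2*pi} (\<lambda>\<theta>. D [] (rcis r \<theta>)) / (2 * pi)"

lemma has_integral_flux:
  assumes "0 < r" "r \<le> s"
  shows "((\<lambda>\<theta>. r * radial_derivative [] r \<theta>) has_integral 2 * pi * flux r) {0..2*pi}"
proof -
  have "continuous_on {0..2*pi} (\<lambda>\<theta>. r * radial_derivative [] r \<theta>)"
    unfolding radial_derivative_def
    by (intro continuous_intros continuous_on_D_rcis) (use rcis_in_U assms in auto)
  then have "((\<lambda>\<theta>. r * radial_derivative [] r \<theta>) has_integral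
                 integral {0..2*pi} (\<lambda>\<theta>. r * radial_derivative [] r \<theta>)) {0..2*pi}"
    by (intro integrable_integral integrable_continuous_real)
  then show ?thesis
    by (simp add: flux_def)
qed

lemma has_integral_tangential_derivative:
  assumes "0 < r" "r \<le> s"
  shows "((\<lambda>\<theta>. r * tangential_derivative l r \<theta>) has_integral 0) {0..2*pi}"
proof -
  have "((\<lambda>\<theta>. r * tangential_derivative l r \<theta>) has_integral D l (rcis r (2*pi)) - D l (rcis r 0)) {0..2*pi}"
    using has_real_derivative_D_rcis_angle rcis_in_U assms
    by (intro fundamental_theorem_of_calculus) (auto simp: has_real_derivative_iff_has_vector_derivative[symmetric])
  then show ?thesis
    by (simp add: rcis_def)
qed

lemma circle_integral_eta_eq_flux:
  assumes g: "\<And>w. w \<in> U \<Longrightarrow> g w = D [] w" and "0 < t" "t \<le> s"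
  shows "circle_integral_dzbar (eta_coeff g) t = of_real (flux t)"
proof -
  have integrand: "eta_coeff g (of_real t * exp (\<i> * of_real \<theta>)) * cnj (\<i> * of_real t * exp (\<i> * of_real \<theta>)) =
          (of_real (t * radial_derivative [] t \<theta>) + \<i> * of_real (t * tangential_derivative [] t \<theta>)) / (2 * pi)"
    for \<theta>
    using partial_x_eq[of g "[]", OF g] partial_y_eq[of g "[]", OF g] rcis_in_U[OF \<open>0 < t\<close> \<open>t \<le> s\<close>, of \<theta>]
    by (simp add: eta_coeff_def radial_derivative_def tangential_derivative_def rcis_conv_exp[symmetric]
        complex_eq_iff Re_exp Im_exp field_simps)
  have "((\<lambda>\<theta>. (of_real (t * radial_derivative [] t \<theta>) + \<i> * of_real (t * tangential_derivative [] t \<theta>))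
                   / (2 * pi)) has_integral of_real (flux t)) {0..2*pi}"
  proof -
    have radial: "((\<lambda>\<theta>. complex_of_real (t * radial_derivative [] t \<theta>)) has_integral of_real (2 * pi * flux t))
            {0..2*pi}"
      by (rule has_integral_of_real[OF has_integral_flux[OF \<open>0 < t\<close> \<open>t \<le> s\<close>]])
    have tangential: "((\<lambda>\<theta>. \<i> * complex_of_real (t * tangential_derivative [] t \<theta>)) has_integral 0) {0..2*pi}"
      using has_integral_mult_right[OF has_integral_of_real[OF
          has_integral_tangential_derivative[OF \<open>0 < t\<close> \<open>t \<le> s\<close>]], of \<i>] by simp
    from has_integral_divide[OF has_integral_add[OF radial tangential], of "2 * pi"]
    show ?thesis
      by simp
  qed
  then show ?thesis
    unfolding circle_integral_dzbar_def integrand by (rule integral_unique)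
qed

lemma has_real_derivative_circle_mean:
  assumes "0 < r" "r < s"
  shows "(circle_mean has_real_derivative flux r / r) (at r)"
proof -
  have U: "rcis x \<theta> \<in> U" if "x \<in> {0<..<s}" for x \<theta>
    using rcis_in_U that by auto
  have "((\<lambda>x. integral (cbox 0 (2*pi)) (\<lambda>\<theta>. D [] (rcis x \<theta>))) has_field_derivative
          integral (cbox 0 (2*pi)) (radial_derivative [] r)) (at r within {0<..<s})"
  proof (rule leibniz_rule_field_derivative)
    show "((\<lambda>x. D [] (rcis x \<theta>)) has_field_derivative radial_derivative [] x \<theta>) (at x within {0<..<s})"
      if "x \<in> {0<..<s}" for x \<theta>
      using has_real_derivative_D_rcis_radius U that by blast
    show "(\<lambda>\<theta>. D [] (rcis x \<theta>)) integrable_on cbox 0 (2*pi)" if "x \<in> {0<..<s}" for x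
      using U that by (intro integrable_continuous continuous_on_D_rcis continuous_intros) auto
    show "continuous_on ({0<..<s} \<times> cbox 0 (2*pi)) (\<lambda>(x, \<theta>). radial_derivative [] x \<theta>)"
      unfolding radial_derivative_def case_prod_beta
      using U by (intro continuous_intros continuous_on_D_rcis) auto
  qed (use assms in auto)
  from DERIV_cdivide[OF this, of "2 * pi"]
  have "(circle_mean has_real_derivative integral (cbox 0 (2*pi)) (radial_derivative [] r) / (2 * pi))
          (at r within {0<..<s})"
    by (simp add: circle_mean_def[abs_def])
  moreover have "at r within {0<..<s} = at r"
    using assms by (intro at_within_open) auto
  moreover have "integral (cbox 0 (2*pi)) (radial_derivative [] r) / (2 * pi) = flux r / r"
    using \<open>0 < r\<close> by (simp add: flux_def)
  ultimately show ?thesis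
    by simp
qed

lemma has_integral_laplacian_radial_part:
  assumes "0 < s1" "s1 < s2" "s2 \<le> s"
  shows "((\<lambda>(\<theta>, r). laplacian_radial_part r \<theta>) has_integral 2 * pi * (flux s2 - flux s1))
           (cbox (0, s1) (2*pi, s2))"
proof -
  have U: "rcis r \<theta> \<in> U" if "r \<in> {s1..s2}" for r \<theta>
    using rcis_in_U that assms by auto
  have cont: "continuous_on (cbox (0, s1) (2*pi, s2)) (\<lambda>(\<theta>, r). laplacian_radial_part r \<theta>)"
    using U by (auto simp: laplacian_radial_part_def radial_derivative_def case_prod_beta
        intro!: continuous_intros continuous_on_D_rcis)
  have "integral (cbox (0, s1) (2*pi, s2)) (\<lambda>(\<theta>, r). laplacian_radial_part r \<theta>) =
        integral {0..2*pi} (\<lambda>\<theta>. integral {s1..s2} (\<lambda>r. laplacian_radial_part r \<theta>))"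
    using integral_prod_continuous[OF cont] by simp
  also have "\<dots> = integral {0..2*pi} (\<lambda>\<theta>. s2 * radial_derivative [] s2 \<theta> - s1 * radial_derivative [] s1 \<theta>)"
    using has_real_derivative_laplacian_radial_part U \<open>s1 < s2\<close>
    by (intro integral_cong integral_unique fundamental_theorem_of_calculus)
      (auto simp: has_real_derivative_iff_has_vector_derivative[symmetric])
  also have "\<dots> = 2 * pi * flux s2 - 2 * pi * flux s1"
    using assms by (intro integral_unique has_integral_diff has_integral_flux) auto
  finally show ?thesis
    using integrable_integral[OF integrable_continuous[OF cont]] by (simp add: right_diff_distrib)
qed

lemma has_integral_laplacian_angular_part:
  assumes "0 < s1" "s2 \<le> s"
  shows "((\<lambda>(\<theta>, r). laplacian_angular_part r \<theta>) has_integral 0) (cbox (0, s1) (2*pi, s2))"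
proof -
  have U: "rcis r \<theta> \<in> U" if "r \<in> {s1..s2}" for r \<theta>
    using rcis_in_U that assms by auto
  have cont: "continuous_on (cbox (0, s1) (2*pi, s2)) (\<lambda>(\<theta>, r). laplacian_angular_part r \<theta>)"
    using U by (auto simp: laplacian_angular_part_def radial_derivative_def tangential_derivative_def
        case_prod_beta intro!: continuous_intros continuous_on_D_rcis)
  have "integral (cbox (0, s1) (2*pi, s2)) (\<lambda>(\<theta>, r). laplacian_angular_part r \<theta>) =
        integral {s1..s2} (\<lambda>r. integral {0..2*pi} (\<lambda>\<theta>. laplacian_angular_part r \<theta>))"
    using integral_prod_continuous[OF cont] integral_swap_continuous[OF cont] by simp
  also have "\<dots> = integral {s1..s2} (\<lambda>r. tangential_derivative [] r (2*pi) - tangential_derivative [] r 0)"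
    using has_real_derivative_laplacian_angular_part U
    by (intro integral_cong integral_unique fundamental_theorem_of_calculus)
      (auto simp: has_real_derivative_iff_has_vector_derivative[symmetric])
  finally show ?thesis
    using integrable_integral[OF integrable_continuous[OF cont]]
    by (simp add: tangential_derivative_def rcis_def)
qed

lemma has_integral_laplacian_annulus:
  assumes "0 < s1" "s1 < s2" "s2 \<le> s"
  shows "((\<lambda>z. (D [True, True] z + D [False, False] z) / (2 * pi)) has_integral flux s2 - flux s1)
           (cball 0 s2 - cball 0 s1)"
proof -
  have cont: "continuous_on {z. s1 \<le> cmod z \<and> cmod z \<le> s2} (\<lambda>z. (D [True, True] z + D [False, False] z) / (2 * pi))"
    using punctured_disc_subset assms
    by (intro continuous_intros continuous_on_subset[OF continuous_on_D]) auto
  have "((\<lambda>(\<theta>, r). r * ((D [True, True] (rcis r \<theta>) + D [False, False] (rcis r \<theta>)) / (2 * pi)))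
          has_integral flux s2 - flux s1) (cbox (0, s1) (2*pi, s2))"
    using has_integral_divide[OF has_integral_add[OF has_integral_laplacian_radial_part[OF assms]
          has_integral_laplacian_angular_part[OF \<open>0 < s1\<close> \<open>s2 \<le> s\<close>]], of "2 * pi"]
    by (simp add: case_prod_beta' polar_laplacian)
  from integral_unique[OF this] show ?thesis
    using has_integral_annulus[OF \<open>0 < s1\<close> \<open>s1 < s2\<close> cont] by simp
qed

lemma flux_mono:
  assumes lap: "\<And>z. z \<in> U \<Longrightarrow> 0 \<le> D [True, True] z + D [False, False] z"
    and "0 < x" "x \<le> y" "y \<le> s"
  shows "flux x \<le> flux y"
proof (cases "x = y")
  case False
  with assms have "0 \<le> flux y - flux x"
    using punctured_disc_subset
    by (intro has_integral_nonneg[OF has_integral_laplacian_annulus]) (auto intro!: divide_nonneg_pos lap)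
  then show ?thesis
    by simp
qed simp

lemma integral_omega_density_annulus:
  assumes g: "\<And>z. z \<in> U \<Longrightarrow> g z = D [] z" and "0 < s1" "s1 < s2" "s2 \<le> s"
  shows "integral (cball 0 s2 - cball 0 s1) (omega_density g) = flux s2 - flux s1"
proof -
  have "integral (cball 0 s2 - cball 0 s1) (omega_density g) =
        integral (cball 0 s2 - cball 0 s1) (\<lambda>z. (D [True, True] z + D [False, False] z) / (2 * pi))"
    using punctured_disc_subset assms by (intro integral_cong omega_density_eq[OF g]) auto
  also have "\<dots> = flux s2 - flux s1"
    using has_integral_laplacian_annulus assms by (blast intro: integral_unique)
  finally show ?thesis .
qed

lemma circle_mean_log_bound:
  assumes "0 < r" "r \<le> s" and bound: "\<And>\<theta>. \<bar>D [] (rcis r \<theta>) + a * ln r\<bar> \<le> B"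
  shows "\<bar>circle_mean r + a * ln r\<bar> \<le> B"
proof -
  define J where "J = integral {0..2*pi} (\<lambda>\<theta>. D [] (rcis r \<theta>) + a * ln r)"
  have cont: "continuous_on {0..2*pi} (\<lambda>\<theta>. D [] (rcis r \<theta>))"
    using rcis_in_U assms by (intro continuous_intros continuous_on_D_rcis) auto
  have "J = integral {0..2*pi} (\<lambda>\<theta>. D [] (rcis r \<theta>)) + 2 * pi * (a * ln r)"
    unfolding J_def using integrable_continuous_real[OF cont] by (subst integral_add) auto
  then have "circle_mean r + a * ln r = J / (2 * pi)"
    by (simp add: circle_mean_def field_simps)
  moreover have "\<bar>J\<bar> \<le> B * (2 * pi - 0)"
    unfolding J_def using bound cont
    by (intro integral_bound[where f="\<lambda>\<theta>. D [] (rcis r \<theta>) + a * ln r", simplified])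
      (auto intro!: continuous_intros)
  ultimately show ?thesis
    by (simp add: abs_divide pos_divide_le_eq)
qed

lemma flux_tendsto:
  assumes lap: "\<And>z. z \<in> U \<Longrightarrow> 0 \<le> D [True, True] z + D [False, False] z"
    and "subpolynomial \<mu>"
    and bound: "\<And>z. z \<in> cball 0 s - {0} \<Longrightarrow> \<bar>D [] z + a * ln (cmod z)\<bar> \<le> ln (\<mu> (1 / cmod z))"
  shows "(flux \<longlongrightarrow> - a) (at_right 0)" and "- a \<le> flux s"
proof -
  have "eventually (\<lambda>r. \<bar>circle_mean r + a * ln r\<bar> \<le> \<delta> * ln (1 / r)) (at_right 0)" if "0 < \<delta>" for \<delta>
    using eventually_at_right_real[OF radius_pos] subpolynomial_ln_eventually_le[OF \<open>subpolynomial \<mu>\<close> that]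
  proof eventually_elim
    case (elim r)
    then have "\<bar>circle_mean r + a * ln r\<bar> \<le> ln (\<mu> (1 / r))"
      using bound[of "rcis r _"] by (intro circle_mean_log_bound) auto
    then show ?case
      using elim by linarith
  qed
  note limit = log_derivative_limit[OF radius_pos has_real_derivative_circle_mean flux_mono[OF lap] this]
  show "(flux \<longlongrightarrow> - a) (at_right 0)" and "- a \<le> flux s"
    using limit radius_pos by auto
qed

end

theorem mainTheorem3:
  fixes s a :: real and g :: "complex \<Rightarrow> real" and U :: "complex set"
    and \<mu> :: "real \<Rightarrow> real"
  assumes "0 < s" and "s \<le> 1"
    and "open U" and "cball 0 s - {0} \<subseteq> U"
    and "smooth_on U g"
    and "semipositive_on U g"
    and "subpolynomial \<mu>"
    and "\<forall>z \<in> cball 0 s - {0}.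
           - ln (\<mu> (1 / cmod z)) \<le> g z + a * ln (cmod z) \<and>
           g z + a * ln (cmod z) \<le> ln (\<mu> (1 / cmod z))"
  shows "\<exists>I::real.
           ((\<lambda>\<epsilon>. integral (cball 0 s - cball 0 \<epsilon>) (omega_density g)) \<longlongrightarrow> I) (at_right 0) \<and>
           ((\<lambda>t. circle_integral_dzbar (eta_coeff g) t) \<longlongrightarrow> - of_real a) (at_right 0) \<and>
           0 \<le> I \<and>
           of_real I = circle_integral_dzbar (eta_coeff g) s + of_real a"
proof -
  obtain D where g: "\<And>z. z \<in> U \<Longrightarrow> g z = D [] z"
    and "\<And>l z. z \<in> U \<Longrightarrow> (D l has_derivative (\<lambda>h. Re h * D (True # l) z + Im h * D (False # l) z)) (at z)"
    using \<open>smooth_on U g\<close> unfolding smooth_on_def by metis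
  then interpret smooth_derivatives_on_punctured_disc U D s
    using assms(1,3,4) by unfold_locales auto
  have lap: "\<And>z. z \<in> U \<Longrightarrow> 0 \<le> D [True, True] z + D [False, False] z"
    using laplacian_nonneg[OF g \<open>semipositive_on U g\<close>] .
  have "\<And>z. z \<in> cball 0 s - {0} \<Longrightarrow> \<bar>D [] z + a * ln (cmod z)\<bar> \<le> ln (\<mu> (1 / cmod z))"
    using assms(4,8) g by (force simp: abs_le_iff)
  note flux = flux_tendsto[OF lap \<open>subpolynomial \<mu>\<close> this]
  have near_0: "eventually (\<lambda>\<epsilon>. \<epsilon> \<in> {0<..<s}) (at_right 0)"
    using eventually_at_right_real[OF \<open>0 < s\<close>] .
  have "((\<lambda>\<epsilon>. integral (cball 0 s - cball 0 \<epsilon>) (omega_density g)) \<longlongrightarrow> flux s + a) (at_right 0)"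
    using tendsto_diff[OF tendsto_const flux(1), of "flux s"] near_0
    by (auto elim!: Lim_transform_eventually eventually_mono simp: integral_omega_density_annulus[OF g])
  moreover have "((\<lambda>t. circle_integral_dzbar (eta_coeff g) t) \<longlongrightarrow> - of_real a) (at_right 0)"
    using tendsto_of_real[OF flux(1), where 'a=complex] near_0
    by (auto elim!: Lim_transform_eventually eventually_mono simp: circle_integral_eta_eq_flux[OF g])
  ultimately show ?thesis
    using flux(2) circle_integral_eta_eq_flux[OF g \<open>0 < s\<close> order_refl]
    by (intro exI[of _ "flux s + a"]) auto
qed

end
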